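(* For every Markov chain with positive equilibrium $P^*$ and every probability distribution $P^0$, the velocity vector $\frac{dP}{dt}\big|_{P=P^0}$ given by its Kolmogorov equation is a linear combination with non-negative coefficients of the vectors $\frac{dP}{dt}\big|_{P=P^0}$ of the two-state reversible chains $A_i\rightleftharpoons A_j$ ($i\ne j$) with equilibrium $P^*$, i.e. of the vectors $\bigl(\frac{p^0_j}{p^*_j}-\frac{p^0_i}{p^*_i}\bigr)\gamma^{ji}$, $1\le j<i\le n$. (The coefficients may depend on $P^0$.) Consequently, for every $P^0$ the set of all vectors $\frac{dP}{dt}\big|_{P=P^0}$ over all Markov chains with equilibrium $P^*$ equals the set of such vectors over all chains with detailed balance and equilibrium $P^*$, namely the cone $\mathbf{Q}(P^0,P^* )$.
   Context: Fix $n\ge 2$ and $P^*=(p^*_i)$ with $p^*_i>0$, $\sum_i p^*_i=1$. A Markov chain is given by rate constants $q_{ij}\ge 0$ ($i\ne j$) with Kolmogorov equation $\frac{dp_i}{dt}=\sum_{j\ne i}(q_{ij}p_j-q_{ji}p_i)$; it has equilibrium $P^*$ if $\sum_{j\ne i}q_{ij}p^*_j=\bigl(\sum_{j\ne i}q_{ji}\bigr)p^*_i$ for all $i$. The two-state chain $A_i\rightleftharpoons A_j$ with equilibrium $P^*$ has only nonzero rates $q_{ji}=1/p^*_i$, $q_{ij}=1/p^*_j$. It has detailed balance if $q_{ij}p^*_j=q_{ji}p^*_i$ for all $i\ne j$. For $i\neq j$, $\gamma^{ji}$ is the vector with $\gamma^{ji}_j=-1$, $\gamma^{ji}_i=1$,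 other coordinates $0$; ${\rm cone}$ denotes non-negative linear combinations; ${\rm sign}$ is the three-valued sign function; $\mathbf{Q}(P,P^* )={\rm cone}\{\gamma^{ji}\,{\rm sign}(\tfrac{p_j}{p^*_j}-\tfrac{p_i}{p^*_i}) : 1\le j<i\le n\}$. *)

theory Defs
  imports Main "HOL.Real"
begin

text \<open>States are indexed by 0,...,n-1 (the paper's A_1,...,A_n). Vectors are
  functions nat => real; only the coordinates k < n are meaningful, and all
  vectors produced below are 0 outside {..<n}.\<close>

definition markov_rates :: "nat \<Rightarrow> (nat \<Rightarrow> nat \<Rightarrow> real) \<Rightarrow> bool" where
  "markov_rates n q \<longleftrightarrow> (\<forall>i<n. \<forall>j<n. i \<noteq> j \<longrightarrow> q i j \<ge> 0)"

definition kolm_rhs :: "nat \<Rightarrow> (nat \<Rightarrow> nat \<Rightarrow> real) \<Rightarrow> (nat \<Rightarrow> real) \<Rightarrow> (nat \<Rightarrow> real)" where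
  "kolm_rhs n q p = (\<lambda>i. if i < n then (\<Sum>j\<in>{..<n} - {i}. q i j * p j - q j i * p i) else 0)"

definition has_equilibrium :: "nat \<Rightarrow> (nat \<Rightarrow> nat \<Rightarrow> real) \<Rightarrow> (nat \<Rightarrow> real) \<Rightarrow> bool" where
  "has_equilibrium n q ps \<longleftrightarrow>
     (\<forall>i<n. (\<Sum>j\<in>{..<n} - {i}. q i j * ps j) = (\<Sum>j\<in>{..<n} - {i}. q j i) * ps i)"

definition detailed_balance :: "nat \<Rightarrow> (nat \<Rightarrow> nat \<Rightarrow> real) \<Rightarrow> (nat \<Rightarrow> real) \<Rightarrow> bool" where
  "detailed_balance n q ps \<longleftrightarrow> (\<forall>i<n. \<forall>j<n. i \<noteq> j \<longrightarrow> q i j * ps j = q j i * ps i)"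

definition two_state :: "(nat \<Rightarrow> real) \<Rightarrow> nat \<Rightarrow> nat \<Rightarrow> (nat \<Rightarrow> nat \<Rightarrow> real)" where
  "two_state ps i j = (\<lambda>a b. if a = j \<and> b = i then 1 / ps i
                              else if a = i \<and> b = j then 1 / ps j else 0)"

definition gamma :: "nat \<Rightarrow> nat \<Rightarrow> (nat \<Rightarrow> real)" where
  "gamma j i = (\<lambda>k. if k = i then 1 else if k = j then -1 else 0)"

definition pairs :: "nat \<Rightarrow> (nat \<times> nat) set" where
  "pairs n = {(j, i). j < i \<and> i < n}"

definition cone_of :: "'a set \<Rightarrow> ('a \<Rightarrow> nat \<Rightarrow> real) \<Rightarrow> (nat \<Rightarrow> real) set" where
  "cone_of I v = {x. \<exists>c. (\<forall>k\<in>I. c k \<ge> 0) \<and> x = (\<lambda>m. \<Sum>k\<in>I. c k * v k m)}"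

definition Qcone :: "nat \<Rightarrow> (nat \<Rightarrow> real) \<Rightarrow> (nat \<Rightarrow> real) \<Rightarrow> (nat \<Rightarrow> real) set" where
  "Qcone n p ps = cone_of (pairs n)
      (\<lambda>(j, i) m. sgn (p j / ps j - p i / ps i) * gamma j i m)"

end

theory Submission
  imports Defs
begin

(* Write x_k = p_k / ps_k for the concentration ratios of a state P and call
   pair_flux x (j,i) = (x_j - x_i) gamma^{ji} the pair flux of (j,i); it is the
   velocity of the two-state chain A_i <=> A_j with equilibrium ps.  The proof shows
   that three sets coincide with the cone spanned by the pair fluxes:
   (1) Detailed balance: the velocity of such a chain is sum over j<i of
       (q_ij ps_j) pair_flux (j,i); conversely any non-negative combination of pair
       fluxes is realised by a detailed-balance chain, so these velocities form the cone.
       Rescaling each generator by |x_j - x_i| shows that this cone is Q(P, ps).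
   (2) Arbitrary chains with equilibrium ps: the velocity v sums to 0 and, because
       the equilibrium condition lets us write v as a net flow proportional to
       x_j - s across any threshold s, its total on every "upper set" of states
       (closed under passing to larger x) is <= 0.  We call such v downhill.
   (3) Every downhill vector lies in the pair-flux cone: a greedy transport argument
       pairs the positive state b of maximal x with a state a of larger x and
       negative v, and transfers mass from a to b, emptying a or b at each step. *)

lemma finite_pairs: "finite (pairs n)"
  by (rule finite_subset[of _ "{..<n} \<times> {..<n}"]) (auto simp: pairs_def)

lemma cone_of_zero: "(\<lambda>m. 0) \<in> cone_of I v"
  unfolding cone_of_def by (auto intro!: exI[of _ "\<lambda>_. 0"])

lemma cone_of_add_generator:
  assumes y: "y \<in> cone_of I v" and I: "finite I" "k \<in> I" and t: "t \<ge> 0"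
  shows "(\<lambda>m. y m + t * v k m) \<in> cone_of I v"
proof -
  obtain c where c: "\<forall>k\<in>I. c k \<ge> 0" "y = (\<lambda>m. \<Sum>k\<in>I. c k * v k m)"
    using y unfolding cone_of_def by blast
  define d where "d = (\<lambda>k'. c k' + (if k' = k then t else 0))"
  have "y m + t * v k m = (\<Sum>k'\<in>I. d k' * v k' m)" for m
  proof -
    have "(\<Sum>k'\<in>I. d k' * v k' m) = y m + (\<Sum>k'\<in>I. if k' = k then t * v k' m else 0)"
      by (simp add: c(2) d_def distrib_right sum.distrib if_distrib[of "\<lambda>a. a * _"] cong: if_cong)
    then show ?thesis using I by simp
  qed
  moreover have "\<forall>k'\<in>I. d k' \<ge> 0" using c(1) t by (simp add: d_def)
  ultimately show ?thesis unfolding cone_of_def by blast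
qed

lemma cone_of_scale:
  assumes "\<forall>k\<in>I. r k \<ge> 0"
  shows "cone_of I (\<lambda>k m. r k * w k m) \<subseteq> cone_of I w"
proof
  fix y assume "y \<in> cone_of I (\<lambda>k m. r k * w k m)"
  then obtain c where c: "\<forall>k\<in>I. c k \<ge> 0" "y = (\<lambda>m. \<Sum>k\<in>I. c k * (r k * w k m))"
    unfolding cone_of_def by blast
  then show "y \<in> cone_of I w"
    unfolding cone_of_def using assms by (auto intro!: exI[of _ "\<lambda>k. c k * r k"] simp: mult.assoc)
qed

lemma cone_of_cong: "(\<And>k. k \<in> I \<Longrightarrow> v k = w k) \<Longrightarrow> cone_of I v = cone_of I w"
  unfolding cone_of_def by (metis (no_types, lifting) sum.cong)

definition pair_flux :: "(nat \<Rightarrow> real) \<Rightarrow> nat \<times> nat \<Rightarrow> nat \<Rightarrow> real" where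
  "pair_flux x = (\<lambda>(j, i) m. (x j - x i) * gamma j i m)"

lemma pair_flux_oriented:
  assumes "a \<noteq> b"
  shows "pair_flux x (min a b, max a b) m = (x a - x b) * gamma a b m"
  using assms by (cases "a < b") (auto simp: pair_flux_def gamma_def min_def max_def)

lemma cone_of_add_move:
  assumes y: "y \<in> cone_of (pairs n) (pair_flux x)"
    and ab: "a < n" "b < n" "x b < x a" and t: "t \<ge> 0"
  shows "(\<lambda>m. y m + t * gamma a b m) \<in> cone_of (pairs n) (pair_flux x)"
proof -
  have "a \<noteq> b" using ab by auto
  then have "(min a b, max a b) \<in> pairs n" using ab by (auto simp: pairs_def min_def max_def)
  moreover have "t * gamma a b m = (t / (x a - x b)) * pair_flux x (min a b, max a b) m" for m
    using ab \<open>a \<noteq> b\<close> by (simp add: pair_flux_oriented)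
  moreover have "t / (x a - x b) \<ge> 0" using ab t by simp
  ultimately show ?thesis using cone_of_add_generator[OF y finite_pairs] by presburger
qed

lemma sum_pairs_gamma:
  assumes "m < n"
  shows "(\<Sum>(j, i)\<in>pairs n. F j i * gamma j i m) = (\<Sum>j<m. F j m) - (\<Sum>i\<in>{m<..<n}. F m i)"
proof -
  have "(\<Sum>(j, i)\<in>pairs n. F j i * gamma j i m)
      = (\<Sum>(j, i)\<in>pairs n. if i = m then F j i else 0) - (\<Sum>(j, i)\<in>pairs n. if j = m then F j i else 0)"
    by (subst sum_subtractf[symmetric]) (rule sum.cong, auto simp: pairs_def gamma_def)
  also have "(\<Sum>(j, i)\<in>pairs n. if i = m then F j i else 0) = (\<Sum>(j, i)\<in>(\<lambda>j. (j, m)) ` {..<m}. F j i)"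
    by (rule sum.mono_neutral_cong_right[OF finite_pairs]) (auto simp: pairs_def assms)
  also have "\<dots> = (\<Sum>j<m. F j m)"
    by (subst sum.reindex) (auto simp: inj_on_def)
  also have "(\<Sum>(j, i)\<in>pairs n. if j = m then F j i else 0) = (\<Sum>(j, i)\<in>(\<lambda>i. (m, i)) ` {m<..<n}. F j i)"
    by (rule sum.mono_neutral_cong_right[OF finite_pairs]) (auto simp: pairs_def assms)
  also have "\<dots> = (\<Sum>i\<in>{m<..<n}. F m i)"
    by (subst sum.reindex) (auto simp: inj_on_def)
  finally show ?thesis .
qed

(* Under detailed balance the velocity is the combination of pair fluxes with
   weights q_ij ps_j (the common equilibrium flux of the pair). *)
lemma velocity_detailed_balance:
  assumes ps: "\<forall>i<n. ps i > 0" and db: "detailed_balance n q ps"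
  shows "kolm_rhs n q p = (\<lambda>m. \<Sum>(j, i)\<in>pairs n. q i j * ps j * pair_flux (\<lambda>k. p k / ps k) (j, i) m)"
proof
  fix m
  define x where "x = (\<lambda>k. p k / ps k)"
  define w where "w = (\<lambda>a b. q a b * ps b)"
  show "kolm_rhs n q p m = (\<Sum>(j, i)\<in>pairs n. q i j * ps j * pair_flux x (j, i) m)"
  proof (cases "m < n")
    case False
    then show ?thesis
      by (auto simp: kolm_rhs_def pair_flux_def gamma_def pairs_def intro!: sum.neutral)
  next
    case m: True
    have w_sym: "w a b = w b a" if "a < n" "b < n" "a \<noteq> b" for a b
      using db that by (auto simp: w_def detailed_balance_def)
    have flux: "w m k * (x k - x m) = q m k * p k - q k m * p m" if "k < n" "k \<noteq> m" for k
      using w_sym[OF m that(1)] ps m that by (auto simp: w_def x_def field_simps)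
    have "(\<Sum>(j, i)\<in>pairs n. q i j * ps j * pair_flux x (j, i) m)
        = (\<Sum>(j, i)\<in>pairs n. w i j * (x j - x i) * gamma j i m)"
      by (rule sum.cong) (auto simp: w_def pair_flux_def)
    also have "\<dots> = (\<Sum>j<m. w m j * (x j - x m)) - (\<Sum>i\<in>{m<..<n}. w i m * (x m - x i))"
      by (rule sum_pairs_gamma[OF m])
    also have "(\<Sum>i\<in>{m<..<n}. w i m * (x m - x i)) = - (\<Sum>i\<in>{m<..<n}. w m i * (x i - x m))"
      by (subst sum_negf[symmetric], rule sum.cong) (auto simp: w_sym[OF _ m] algebra_simps)
    also have "(\<Sum>j<m. w m j * (x j - x m)) - - (\<Sum>i\<in>{m<..<n}. w m i * (x i - x m))
        = (\<Sum>k\<in>{..<m} \<union> {m<..<n}. w m k * (x k - x m))"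
      by (subst sum.union_disjoint) auto
    also have "{..<m} \<union> {m<..<n} = {..<n} - {m}" using m by auto
    also have "(\<Sum>k\<in>{..<n} - {m}. w m k * (x k - x m)) = kolm_rhs n q p m"
      using m by (simp add: kolm_rhs_def flux)
    finally show ?thesis by simp
  qed
qed

lemma two_state_detailed_balance:
  assumes ps: "\<forall>i<n. ps i > 0" and ji: "(j, i) \<in> pairs n"
  shows "detailed_balance n (two_state ps i j) ps"
proof -
  have "ps j > 0" "ps i > 0" using ps ji by (auto simp: pairs_def)
  then show ?thesis using ji by (auto simp: detailed_balance_def two_state_def pairs_def)
qed

lemma two_state_velocity:
  assumes ps: "\<forall>i<n. ps i > 0" and ji: "(j, i) \<in> pairs n"
  shows "kolm_rhs n (two_state ps i j) p = pair_flux (\<lambda>k. p k / ps k) (j, i)"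
proof -
  define x where "x = (\<lambda>k. p k / ps k)"
  have "ps j > 0" "ps i > 0" using ps ji by (auto simp: pairs_def)
  then have weight: "two_state ps i j i' j' * ps j' = (if (j', i') = (j, i) then 1 else 0)"
    if "(j', i') \<in> pairs n" for j' i'
    using that ji by (auto simp: two_state_def pairs_def split: if_splits)
  have "kolm_rhs n (two_state ps i j) p
      = (\<lambda>m. \<Sum>(j', i')\<in>pairs n. two_state ps i j i' j' * ps j' * pair_flux x (j', i') m)"
    unfolding x_def by (rule velocity_detailed_balance[OF ps two_state_detailed_balance[OF ps ji]])
  also have "\<dots> = (\<lambda>m. \<Sum>k\<in>pairs n. if k = (j, i) then pair_flux x k m else 0)"
    by (intro ext sum.cong refl) (auto simp: weight split: if_splits)
  also have "\<dots> = pair_flux x (j, i)"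
    using ji finite_pairs by auto
  finally show ?thesis unfolding x_def .
qed

lemma detailed_balance_equilibrium:
  assumes "detailed_balance n q ps"
  shows "has_equilibrium n q ps"
  unfolding has_equilibrium_def
proof (intro allI impI)
  fix i assume "i < n"
  then have "(\<Sum>j\<in>{..<n} - {i}. q i j * ps j) = (\<Sum>j\<in>{..<n} - {i}. q j i * ps i)"
    using assms by (intro sum.cong) (auto simp: detailed_balance_def)
  then show "(\<Sum>j\<in>{..<n} - {i}. q i j * ps j) = (\<Sum>j\<in>{..<n} - {i}. q j i) * ps i"
    by (simp add: sum_distrib_right)
qed

(* Q(P, ps) is the pair-flux cone: the generators differ by the factors |x_j - x_i|,
   and sgn d = d / |d| holds also for d = 0. *)
lemma Qcone_eq_pair_flux_cone:
  "Qcone n p ps = cone_of (pairs n) (pair_flux (\<lambda>k. p k / ps k))"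
proof
  define d where "d = (\<lambda>(j, i). p j / ps j - p i / ps i)"
  have sgn_scaled: "sgn e * g = inverse \<bar>e\<bar> * (e * g)" for e g :: real
    by (cases e rule: linorder_cases) (auto simp: sgn_if)
  have abs_scaled: "\<bar>e\<bar> * (sgn e * g) = e * g" for e g :: real
    by (metis mult.assoc mult.commute sgn_mult_abs)
  have sgn_form: "(\<lambda>(j, i) m. sgn (p j / ps j - p i / ps i) * gamma j i m)
      = (\<lambda>k m. inverse \<bar>d k\<bar> * pair_flux (\<lambda>k. p k / ps k) k m)"
    by (intro ext) (auto simp: d_def pair_flux_def sgn_scaled split: prod.splits)
  have flux_form: "pair_flux (\<lambda>k. p k / ps k)
      = (\<lambda>k m. \<bar>d k\<bar> * (\<lambda>(j, i) m. sgn (p j / ps j - p i / ps i) * gamma j i m) k m)"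
    by (intro ext) (auto simp: d_def pair_flux_def abs_scaled split: prod.splits)
  show "Qcone n p ps \<subseteq> cone_of (pairs n) (pair_flux (\<lambda>k. p k / ps k))"
    unfolding Qcone_def sgn_form by (rule cone_of_scale) simp
  show "cone_of (pairs n) (pair_flux (\<lambda>k. p k / ps k)) \<subseteq> Qcone n p ps"
    unfolding Qcone_def by (subst flux_form, rule cone_of_scale) simp
qed

lemma detailed_balance_velocity_in_cone:
  assumes ps: "\<forall>i<n. ps i > 0" and mr: "markov_rates n q" and db: "detailed_balance n q ps"
  shows "kolm_rhs n q p \<in> cone_of (pairs n) (pair_flux (\<lambda>k. p k / ps k))"
proof -
  define c where "c = (\<lambda>(j, i). q i j * ps j)"
  have "q i j * ps j \<ge> 0" if "j < i" "i < n" for i j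
  proof -
    have "q i j \<ge> 0" "ps j > 0" using mr ps that by (auto simp: markov_rates_def)
    then show ?thesis by simp
  qed
  then have "\<forall>k\<in>pairs n. c k \<ge> 0" by (auto simp: c_def pairs_def)
  moreover have "kolm_rhs n q p = (\<lambda>m. \<Sum>k\<in>pairs n. c k * pair_flux (\<lambda>k. p k / ps k) k m)"
    unfolding velocity_detailed_balance[OF ps db] c_def by (simp add: case_prod_unfold)
  ultimately show ?thesis unfolding cone_of_def by blast
qed

(* Every point of the pair-flux cone is the velocity of a detailed-balance chain:
   give the pair {a,b} the symmetric equilibrium flux c_(a,b). *)
lemma pair_flux_cone_realised:
  assumes ps: "\<forall>i<n. ps i > 0" and y: "y \<in> cone_of (pairs n) (pair_flux (\<lambda>k. p k / ps k))"
  shows "\<exists>q. markov_rates n q \<and> detailed_balance n q ps \<and> kolm_rhs n q p = y"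
proof -
  obtain c where c: "\<forall>k\<in>pairs n. c k \<ge> 0"
    and y_eq: "y = (\<lambda>m. \<Sum>k\<in>pairs n. c k * pair_flux (\<lambda>k. p k / ps k) k m)"
    using y unfolding cone_of_def by blast
  define q where "q = (\<lambda>a b. if a \<noteq> b \<and> a < n \<and> b < n then c (min a b, max a b) / ps b else 0)"
  have weight: "q a b * ps b = c (min a b, max a b)" if "a < n" "b < n" "a \<noteq> b" for a b
  proof -
    have "ps b > 0" using ps that by simp
    then show ?thesis using that by (simp add: q_def)
  qed
  have "markov_rates n q"
    unfolding markov_rates_def
  proof (intro allI impI)
    fix a b assume ab: "a < n" "b < n" "a \<noteq> b"
    then have "c (min a b, max a b) \<ge> 0" "ps b > 0"
      using c ps by (auto simp: pairs_def min_def max_def)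
    then show "q a b \<ge> 0" by (simp add: q_def)
  qed
  moreover have db: "detailed_balance n q ps"
    unfolding detailed_balance_def by (simp add: weight min.commute max.commute)
  moreover have "kolm_rhs n q p = y"
    unfolding velocity_detailed_balance[OF ps db] y_eq
    by (intro ext sum.cong refl) (auto simp: pairs_def weight)
  ultimately show ?thesis by blast
qed

definition upper_set :: "nat \<Rightarrow> (nat \<Rightarrow> real) \<Rightarrow> nat set \<Rightarrow> bool" where
  "upper_set n x U \<longleftrightarrow> U \<subseteq> {..<n} \<and> (\<forall>k\<in>U. \<forall>l<n. x k < x l \<longrightarrow> l \<in> U)"

definition downhill :: "nat \<Rightarrow> (nat \<Rightarrow> real) \<Rightarrow> (nat \<Rightarrow> real) \<Rightarrow> bool" where
  "downhill n x v \<longleftrightarrow> (\<forall>m. n \<le> m \<longrightarrow> v m = 0) \<and> (\<Sum>k<n. v k) = 0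
     \<and> (\<forall>U. upper_set n x U \<longrightarrow> sum v U \<le> 0)"

lemma sum_net_flow_internal_cancels:
  fixes f :: "'a \<Rightarrow> 'a \<Rightarrow> 'b::ab_group_add"
  assumes "finite N" "U \<subseteq> N"
  shows "(\<Sum>i\<in>U. \<Sum>j\<in>N. f i j - f j i) = (\<Sum>i\<in>U. \<Sum>j\<in>N - U. f i j - f j i)"
proof -
  have "(\<Sum>i\<in>U. \<Sum>j\<in>N. f i j - f j i)
      = (\<Sum>i\<in>U. \<Sum>j\<in>N - U. f i j - f j i) + (\<Sum>i\<in>U. \<Sum>j\<in>U. f i j - f j i)"
    using assms by (simp add: sum.distrib[symmetric] sum.subset_diff[OF assms(2,1)])
  moreover have "(\<Sum>i\<in>U. \<Sum>j\<in>U. f i j - f j i) = 0"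
    using sum.swap[of "\<lambda>i j. f j i" U U] by (simp add: sum_subtractf)
  ultimately show ?thesis by simp
qed

(* With equilibrium ps, the velocity is the net flow of F_s(a,b) = q_ab ps_b (x_b - s),
   for any threshold s (the s-terms cancel by the equilibrium condition). *)
lemma velocity_net_flow:
  fixes p :: "nat \<Rightarrow> real" and s :: real
  assumes ps: "\<forall>i<n. ps i > 0" and eq: "has_equilibrium n q ps" and i: "i < n"
  defines "F \<equiv> \<lambda>a b. if a = b then 0 else q a b * ps b * (p b / ps b - s)"
  shows "kolm_rhs n q p i = (\<Sum>j<n. F i j - F j i)"
proof -
  have balance: "(\<Sum>j\<in>{..<n} - {i}. q i j * ps j) = (\<Sum>j\<in>{..<n} - {i}. q j i * ps i)"
    using eq i by (simp add: has_equilibrium_def sum_distrib_right)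
  have "(\<Sum>j<n. F i j - F j i) = (\<Sum>j\<in>{..<n} - {i}. F i j - F j i)"
    using i by (simp add: sum.remove F_def)
  also have "\<dots> = (\<Sum>j\<in>{..<n} - {i}. (q i j * p j - q j i * p i) - s * (q i j * ps j - q j i * ps i))"
    using ps i by (intro sum.cong refl) (auto simp: F_def field_simps)
  also have "\<dots> = kolm_rhs n q p i"
    using i by (simp add: sum_subtractf sum_distrib_left[symmetric] balance kolm_rhs_def)
  finally show ?thesis by simp
qed

(* The velocity of any chain with equilibrium ps is downhill for x = p / ps:
   taking s = min of x on an upper set U, every flow across the boundary of U
   points out of U. *)
lemma velocity_downhill:
  assumes ps: "\<forall>i<n. ps i > 0" and mr: "markov_rates n q" and eq: "has_equilibrium n q ps"
  shows "downhill n (\<lambda>k. p k / ps k) (kolm_rhs n q p)"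
proof -
  define x where "x = (\<lambda>k. p k / ps k)"
  define F where "F = (\<lambda>s a b. if a = b then 0 else q a b * ps b * (x b - s))"
  have net: "kolm_rhs n q p i = (\<Sum>j<n. F s i j - F s j i)" if "i < n" for i s
    unfolding F_def x_def by (rule velocity_net_flow[OF ps eq that])
  have sum_U: "sum (kolm_rhs n q p) U = (\<Sum>i\<in>U. \<Sum>j\<in>{..<n} - U. F s i j - F s j i)"
    if "U \<subseteq> {..<n}" for U s
    using that net by (simp add: sum_net_flow_internal_cancels[symmetric] subset_iff)
  have "(\<Sum>k<n. kolm_rhs n q p k) = 0"
    using sum_U[of "{..<n}" 0] by simp
  moreover have "sum (kolm_rhs n q p) U \<le> 0" if U: "upper_set n x U" for U
  proof (cases "U = {}")
    case False
    have finU: "finite U" using U by (auto simp: upper_set_def finite_subset)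
    define s where "s = Min (x ` U)"
    have out_nonpos: "F s i j - F s j i \<le> 0" if "i \<in> U" "j \<in> {..<n} - U" for i j
    proof -
      have "s \<le> x i" using finU that by (simp add: s_def)
      moreover have "x j \<le> s"
        using Min_in[of "x ` U"] finU False U that by (force simp: s_def upper_set_def)
      moreover have "i < n" "j < n" "i \<noteq> j" using U that by (auto simp: upper_set_def)
      then have "q i j \<ge> 0" "q j i \<ge> 0" "ps i > 0" "ps j > 0"
        using mr ps by (auto simp: markov_rates_def)
      ultimately have "q i j * ps j * (x j - s) \<le> 0" "q j i * ps i * (x i - s) \<ge> 0"
        by (simp_all add: mult_nonneg_nonpos)
      then show ?thesis using \<open>i \<noteq> j\<close> by (simp add: F_def)
    qed
    have "(\<Sum>i\<in>U. \<Sum>j\<in>{..<n} - U. F s i j - F s j i) \<le> 0"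
      by (blast intro: sum_nonpos out_nonpos)
    then show ?thesis
      using U by (simp add: sum_U[of U s] upper_set_def)
  qed simp
  ultimately show ?thesis unfolding downhill_def x_def by (simp add: kolm_rhs_def)
qed

lemma sum_gamma:
  assumes "finite U" "a \<noteq> b"
  shows "sum (gamma a b) U = (if b \<in> U then 1 else 0) - (if a \<in> U then 1 else 0)"
proof -
  have "gamma a b = (\<lambda>m. (if m = b then 1 else 0) - (if m = a then 1 else 0))"
    using assms(2) by (auto simp: gamma_def)
  then show ?thesis using assms(1) by (simp add: sum_subtractf)
qed

lemma downhill_has_positive:
  assumes dh: "downhill n x v" and nz: "\<exists>k<n. v k \<noteq> 0"
  shows "\<exists>k<n. v k > 0"
proof (rule ccontr)
  assume "\<not> (\<exists>k<n. v k > 0)"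
  then have "\<forall>k\<in>{..<n}. - v k \<ge> 0" by auto
  moreover have "(\<Sum>k<n. - v k) = 0" using dh by (simp add: downhill_def sum_negf)
  ultimately have "\<forall>k\<in>{..<n}. v k = 0" using sum_nonneg_eq_0_iff[of "{..<n}" "\<lambda>k. - v k"] by simp
  then show False using nz by auto
qed

(* If b carries positive mass and has maximal x among such states, some state of
   larger x carries negative mass (the upper set above b, with b added, has total <= 0). *)
lemma downhill_partner:
  assumes dh: "downhill n x v" and b: "b < n" "v b > 0"
    and b_top: "\<And>k. k < n \<Longrightarrow> v k > 0 \<Longrightarrow> x k \<le> x b"
  shows "\<exists>a<n. x b < x a \<and> v a < 0"
proof -
  define A where "A = {k. k < n \<and> x b < x k}"
  have "upper_set n x (insert b A)" using b by (auto simp: upper_set_def A_def)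
  then have "sum v (insert b A) \<le> 0" using dh by (simp add: downhill_def)
  moreover have "b \<notin> A" "finite A" by (auto simp: A_def)
  ultimately have "sum v A < 0" using b by simp
  then obtain a where "a \<in> A" "v a < 0" by (meson not_less sum_nonneg)
  then show ?thesis by (auto simp: A_def)
qed

lemma downhill_transfer:
  assumes dh: "downhill n x v" and ab: "a < n" "b < n" "x b < x a"
    and b_top: "\<And>k. k < n \<Longrightarrow> v k > 0 \<Longrightarrow> x k \<le> x b"
    and c: "0 \<le> c" "c \<le> - v a" "c \<le> v b"
  shows "downhill n x (\<lambda>m. v m - c * gamma a b m)"
proof -
  have "a \<noteq> b" using ab by auto
  have sum_shift: "sum (\<lambda>m. v m - c * gamma a b m) U
      = sum v U - c * ((if b \<in> U then 1 else 0) - (if a \<in> U then 1 else 0))" if "finite U" for U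
    using that \<open>a \<noteq> b\<close> by (simp add: sum_subtractf sum_distrib_left[symmetric] sum_gamma)
  have cut: "sum (\<lambda>m. v m - c * gamma a b m) U \<le> 0" if U: "upper_set n x U" for U
  proof -
    have finU: "finite U" and v_cut: "sum v U \<le> 0"
      using U dh by (auto simp: upper_set_def downhill_def finite_subset)
    consider "a \<in> U \<longrightarrow> b \<in> U" | "a \<in> U" "b \<notin> U" "\<exists>k\<in>U. x k \<le> x b"
      | "a \<in> U" "b \<notin> U" "\<forall>k\<in>U. x b < x k"
      by (meson not_less)
    then show ?thesis
    proof cases
      case 1
      then show ?thesis using v_cut c by (auto simp: sum_shift[OF finU])
    next
      case 2
      then have "upper_set n x (insert b U)"
        using U ab by (fastforce simp: upper_set_def)
      then have "sum v (insert b U) \<le> 0" using dh by (simp add: downhill_def)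
      then have "sum v U + v b \<le> 0" using finU \<open>b \<notin> U\<close> by simp
      then show ?thesis using 2 c by (simp add: sum_shift[OF finU])
    next
      case 3
      have "v k - c * gamma a b k \<le> 0" if "k \<in> U" for k
      proof (cases "k = a")
        case True
        then show ?thesis using c \<open>a \<noteq> b\<close> by (simp add: gamma_def)
      next
        case False
        have "k \<noteq> b" "k < n" using that 3 U by (auto simp: upper_set_def)
        then have "\<not> v k > 0" using b_top[of k] 3 that by fastforce
        then show ?thesis using False \<open>k \<noteq> b\<close> by (simp add: gamma_def)
      qed
      then show ?thesis by (rule sum_nonpos)
    qed
  qed
  have "(\<Sum>m<n. v m - c * gamma a b m) = 0"
    using dh ab by (simp add: sum_shift downhill_def)
  moreover have "\<forall>m. n \<le> m \<longrightarrow> v m - c * gamma a b m = 0"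
    using dh ab by (auto simp: downhill_def gamma_def)
  ultimately show ?thesis using cut by (simp add: downhill_def)
qed

theorem downhill_in_pair_flux_cone:
  assumes "downhill n x v"
  shows "v \<in> cone_of (pairs n) (pair_flux x)"
  using assms
proof (induction "card {k. k < n \<and> v k \<noteq> 0}" arbitrary: v rule: less_induct)
  case less
  show ?case
  proof (cases "\<exists>k<n. v k \<noteq> 0")
    case False
    then have "v = (\<lambda>m. 0)"
      using less.prems by (auto simp: downhill_def not_less[symmetric])
    then show ?thesis by (simp add: cone_of_zero)
  next
    case True
    define S where "S = {k. k < n \<and> v k > 0}"
    have "finite S" "S \<noteq> {}"
      using downhill_has_positive[OF less.prems True] by (auto simp: S_def)
    then obtain b where b: "b \<in> S" "x b = Max (x ` S)"
      by (metis (mono_tags, lifting) Max_in finite_imageI image_iff image_is_empty)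
    have b_top: "x k \<le> x b" if "k < n" "v k > 0" for k
      using that b \<open>finite S\<close> by (simp add: S_def)
    obtain a where a: "a < n" "x b < x a" "v a < 0"
      using downhill_partner[OF less.prems _ _ b_top] b(1) by (auto simp: S_def)
    have "b < n" "v b > 0" using b(1) by (auto simp: S_def)
    define c where "c = min (- v a) (v b)"
    define v' where "v' = (\<lambda>m. v m - c * gamma a b m)"
    have "c > 0" using a \<open>v b > 0\<close> by (simp add: c_def)
    have dh': "downhill n x v'"
      unfolding v'_def using less.prems a \<open>b < n\<close> b_top \<open>c > 0\<close>
      by (intro downhill_transfer) (auto simp: c_def)
    have "{k. k < n \<and> v' k \<noteq> 0} \<subseteq> {k. k < n \<and> v k \<noteq> 0}"
      using a \<open>v b > 0\<close> by (auto simp: v'_def gamma_def)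
    moreover have "v' a = 0 \<or> v' b = 0"
      using a by (auto simp: v'_def gamma_def c_def min_def)
    then have "a \<notin> {k. k < n \<and> v' k \<noteq> 0} \<or> b \<notin> {k. k < n \<and> v' k \<noteq> 0}"
      by auto
    moreover have "a \<in> {k. k < n \<and> v k \<noteq> 0}" "b \<in> {k. k < n \<and> v k \<noteq> 0}"
      using a \<open>b < n\<close> \<open>v b > 0\<close> by auto
    ultimately have "{k. k < n \<and> v' k \<noteq> 0} \<subset> {k. k < n \<and> v k \<noteq> 0}"
      by blast
    then have "v' \<in> cone_of (pairs n) (pair_flux x)"
      using less.hyps[OF psubset_card_mono dh'] by simp
    then have "(\<lambda>m. v' m + c * gamma a b m) \<in> cone_of (pairs n) (pair_flux x)"
      using a \<open>b < n\<close> \<open>c > 0\<close> by (intro cone_of_add_move) auto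
    then show ?thesis by (simp add: v'_def)
  qed
qed

lemma detailed_balance_velocities:
  assumes ps: "\<forall>i<n. ps i > 0"
  shows "{kolm_rhs n q p | q. markov_rates n q \<and> detailed_balance n q ps \<and> has_equilibrium n q ps}
       = cone_of (pairs n) (pair_flux (\<lambda>k. p k / ps k))"
  using detailed_balance_velocity_in_cone[OF ps] pair_flux_cone_realised[OF ps]
    detailed_balance_equilibrium by blast

lemma equilibrium_velocities:
  assumes ps: "\<forall>i<n. ps i > 0"
  shows "{kolm_rhs n q p | q. markov_rates n q \<and> has_equilibrium n q ps}
       = cone_of (pairs n) (pair_flux (\<lambda>k. p k / ps k))"
  using downhill_in_pair_flux_cone[OF velocity_downhill[OF ps]] detailed_balance_velocities[OF ps]
  by blast

theorem mainTheorem9: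
  fixes n :: nat and ps p0 :: "nat \<Rightarrow> real"
  assumes n2: "n \<ge> 2"
    and ps_pos: "\<forall>i<n. ps i > 0"
    and ps_sum: "(\<Sum>i<n. ps i) = 1"
    and p0_nonneg: "\<forall>i<n. p0 i \<ge> 0"
    and p0_sum: "(\<Sum>i<n. p0 i) = 1"
  shows "(\<forall>q. markov_rates n q \<and> has_equilibrium n q ps \<longrightarrow>
            kolm_rhs n q p0 \<in> cone_of (pairs n) (\<lambda>(j, i). kolm_rhs n (two_state ps i j) p0))
       \<and> (\<forall>j i. (j, i) \<in> pairs n \<longrightarrow>
            kolm_rhs n (two_state ps i j) p0 = (\<lambda>m. (p0 j / ps j - p0 i / ps i) * gamma j i m))
       \<and> {kolm_rhs n q p0 | q. markov_rates n q \<and> has_equilibrium n q ps}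
           = {kolm_rhs n q p0 | q. markov_rates n q \<and> detailed_balance n q ps \<and> has_equilibrium n q ps}
       \<and> {kolm_rhs n q p0 | q. markov_rates n q \<and> detailed_balance n q ps \<and> has_equilibrium n q ps}
           = Qcone n p0 ps"
proof -
  let ?flux_cone = "cone_of (pairs n) (pair_flux (\<lambda>k. p0 k / ps k))"
  have two_state_cone: "cone_of (pairs n) (\<lambda>(j, i). kolm_rhs n (two_state ps i j) p0) = ?flux_cone"
    by (rule cone_of_cong) (auto simp: two_state_velocity[OF ps_pos])
  have "\<forall>q. markov_rates n q \<and> has_equilibrium n q ps \<longrightarrow> kolm_rhs n q p0 \<in> ?flux_cone"
    using equilibrium_velocities[OF ps_pos, of p0] by blast
  moreover have "\<forall>j i. (j, i) \<in> pairs n \<longrightarrow>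
      kolm_rhs n (two_state ps i j) p0 = (\<lambda>m. (p0 j / ps j - p0 i / ps i) * gamma j i m)"
    by (simp add: two_state_velocity[OF ps_pos] pair_flux_def)
  ultimately show ?thesis
    unfolding two_state_cone equilibrium_velocities[OF ps_pos] detailed_balance_velocities[OF ps_pos]
      Qcone_eq_pair_flux_cone by blast
qed

end
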